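(* Let $n\ge 4$ and let $\mathcal{W}(n)=(Q,\Sigma,\delta,0,\{n-2\})$ with $Q=\{0,\dots,n-1\}$, where $\Sigma$ consists of the following letters: (1) $b_i$ for $1\le i\le n-3$, inducing the transformation $(0\to n-1)(i\to n-2)(n-2\to n-1)$; (2) one letter $c_i$ for every transformation of $Q$ that maps $0$ to $n-2$, maps $\{n-2,n-1\}$ to $n-1$ and maps $Q_M$ into $Q\setminus\{0,n-2\}$, other than the transformation $(0\to n-2)(Q_M\to n-1)(n-2\to n-1)$; (3) one letter $d_i$ for every transformation of $Q$ that maps $0$ to a state of $Q_M$, maps $Q_M$ into $\{n-2,n-1\}$ and maps $\{n-2,n-1\}$ to $n-1$, other than the transformations $(0\to q)(Q_M\to n-1)(n-2\to n-1)$ with $q\in Q_M$. Then the transition semigroup of $\mathcal{W}(n)$ is $\mathbf{W}^{\ge 6}_{\mathrm{bf}}(n)$.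
   Context: $Q_M=\{1,\dots,n-3\}$. Transformations act on the right, $q(st)=(qs)t$; the transition semigroup of a DFA is the semigroup of transformations of its state set induced by nonempty words. For $S\subseteq Q$ and $q\in Q$, $(S\to q)$ denotes the transformation mapping every state of $S$ to $q$ and fixing all other states; $(p\to q)$ means $(\{p\}\to q)$; juxtaposition denotes composition. Let $\mathbf{B}_{\mathrm{bf}}(n)$ be the set of all transformations $t$ of $Q$ with $0\notin Qt$, $(n-1)t=n-1$, $(n-2)t=n-1$, and for all $j\ge1$, either $0t^j=n-1$ or $0t^j\ne qt^j$ for all $0<q<n-1$. Then $\mathbf{W}^{\ge 6}_{\mathrm{bf}}(n)=\{t\in\mathbf{B}_{\mathrm{bf}}(n)\mid 0t\in\{n-2,n-1\}$, or $0t\in Q_M$ and $qt\in\{n-2,n-1\}$ for all $q\in Q_M\}$. *)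

theory Defs
  imports Main
begin

text \<open>States are the naturals 0..n-1. A transformation of Q is represented as a
function nat => nat mapping Q into Q and fixing every number >= n (so that
equality of transformations is extensional equality of functions).
Transformations act on the right: q(st) = (qs)t, i.e. st corresponds to t o s.\<close>

definition transf :: "nat \<Rightarrow> (nat \<Rightarrow> nat) set" where
  "transf n = {t. (\<forall>q<n. t q < n) \<and> (\<forall>q\<ge>n. t q = q)}"

definition QM :: "nat \<Rightarrow> nat set" where
  "QM n = {1..n-3}"

definition trans_semigroup :: "(nat \<Rightarrow> nat) set \<Rightarrow> (nat \<Rightarrow> nat) set" where
  "trans_semigroup Sig =
     {foldl (\<lambda>t a. a \<circ> t) id w | w. w \<noteq> [] \<and> set w \<subseteq> Sig}"

definition B_bf :: "nat \<Rightarrow> (nat \<Rightarrow> nat) set" where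
  "B_bf n = {t \<in> transf n.
       0 \<notin> t ` {0..<n} \<and> t (n-1) = n-1 \<and> t (n-2) = n-1 \<and>
       (\<forall>j\<ge>1. (t ^^ j) 0 = n-1 \<or> (\<forall>q. 0 < q \<and> q < n-1 \<longrightarrow> (t ^^ j) 0 \<noteq> (t ^^ j) q))}"

definition W_bf6 :: "nat \<Rightarrow> (nat \<Rightarrow> nat) set" where
  "W_bf6 n = {t \<in> B_bf n. t 0 \<in> {n-2, n-1} \<or>
                 (t 0 \<in> QM n \<and> (\<forall>q\<in>QM n. t q \<in> {n-2, n-1}))}"

text \<open>Letter b_i: (0 -> n-1)(i -> n-2)(n-2 -> n-1), read as the simultaneous map.\<close>
definition bW :: "nat \<Rightarrow> nat \<Rightarrow> (nat \<Rightarrow> nat)" where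
  "bW n i = (\<lambda>q. if q = 0 then n-1 else if q = i then n-2 else if q = n-2 then n-1 else q)"

definition cExcl :: "nat \<Rightarrow> (nat \<Rightarrow> nat)" where
  "cExcl n = (\<lambda>q. if q = 0 then n-2 else if q < n then n-1 else q)"

definition dExcl :: "nat \<Rightarrow> nat \<Rightarrow> (nat \<Rightarrow> nat)" where
  "dExcl n p = (\<lambda>q. if q = 0 then p else if q < n then n-1 else q)"

definition c_letters :: "nat \<Rightarrow> (nat \<Rightarrow> nat) set" where
  "c_letters n = {t \<in> transf n. t 0 = n-2 \<and> t (n-2) = n-1 \<and> t (n-1) = n-1 \<and>
        (\<forall>q\<in>QM n. t q \<notin> {0, n-2}) \<and> t \<noteq> cExcl n}"

definition d_letters :: "nat \<Rightarrow> (nat \<Rightarrow> nat) set" where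
  "d_letters n = {t \<in> transf n. t 0 \<in> QM n \<and> (\<forall>q\<in>QM n. t q \<in> {n-2, n-1}) \<and>
        t (n-2) = n-1 \<and> t (n-1) = n-1 \<and> (\<forall>p\<in>QM n. t \<noteq> dExcl n p)}"

definition Sigma_W :: "nat \<Rightarrow> (nat \<Rightarrow> nat) set" where
  "Sigma_W n = {bW n i | i. 1 \<le> i \<and> i \<le> n-3} \<union> c_letters n \<union> d_letters n"

end

theory Submission imports Defs begin

text \<open>Membership in W_bf6(n) amounts to one of three shapes, according to the image of 0
(the states n-2 and n-1 always go to n-1): 0 goes to n-1 and no state of Q_M goes to 0;
0 goes to n-2 and Q_M avoids 0 and n-2; or 0 goes into Q_M and Q_M goes into {n-2, n-1}.
Every letter has one of these shapes and the shapes are closed under composition.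
Conversely, a transformation of the second or third shape is a letter, or one of the
excluded transformations, each of which is a product of two letters. A transformation t
of the first shape is the letter of the second shape that agrees with t on Q_M except that
it sends to i the states that t sends to n-2, followed by b_i; such an i \<in> Q_M outside
t(Q_M) exists by counting, since then t(Q_M) contains n-2. If no state goes to n-2, the
c letter fixing Q_M takes the place of b_i.\<close>

lemma foldl_comp_start:
  fixes s :: "'a \<Rightarrow> 'a"
  shows "foldl (\<lambda>t a. a \<circ> t) s w = foldl (\<lambda>t a. a \<circ> t) id w \<circ> s"
proof (induction w arbitrary: s)
  case (Cons a w)
  have "foldl (\<lambda>t a. a \<circ> t) id (a # w) = foldl (\<lambda>t a. a \<circ> t) id w \<circ> a"
    using Cons.IH[of "a \<circ> id"] by (simp only: foldl_Cons comp_id)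
  then show ?case
    using Cons.IH[of "a \<circ> s"] by (simp only: foldl_Cons comp_assoc)
qed simp

lemma trans_semigroup_letter: "a \<in> Sig \<Longrightarrow> a \<in> trans_semigroup Sig"
  unfolding trans_semigroup_def by (intro CollectI exI[of _ "[a]"]) simp

lemma trans_semigroup_comp:
  assumes "s \<in> trans_semigroup Sig" "t \<in> trans_semigroup Sig"
  shows "t \<circ> s \<in> trans_semigroup Sig"
proof -
  obtain u v where s: "s = foldl (\<lambda>t a. a \<circ> t) id u" "u \<noteq> []" "set u \<subseteq> Sig"
    and t: "t = foldl (\<lambda>t a. a \<circ> t) id v" "v \<noteq> []" "set v \<subseteq> Sig"
    using assms unfolding trans_semigroup_def by blast
  have "t \<circ> s = foldl (\<lambda>t a. a \<circ> t) id (u @ v)"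
    unfolding s(1) t(1) foldl_append by (rule foldl_comp_start[symmetric])
  then show ?thesis
    unfolding trans_semigroup_def using s(2,3) t(2,3) by (intro CollectI exI[of _ "u @ v"]) simp
qed

lemma trans_semigroup_induct[consumes 1, case_names letter step]:
  assumes "t \<in> trans_semigroup Sig"
    and letter: "\<And>a. a \<in> Sig \<Longrightarrow> P a"
    and step: "\<And>s a. P s \<Longrightarrow> a \<in> Sig \<Longrightarrow> P (a \<circ> s)"
  shows "P t"
proof -
  obtain w where "t = foldl (\<lambda>t a. a \<circ> t) id w" "w \<noteq> []" "set w \<subseteq> Sig"
    using assms(1) unfolding trans_semigroup_def by blast
  moreover have "w \<noteq> [] \<Longrightarrow> set w \<subseteq> Sig \<Longrightarrow> P (foldl (\<lambda>t a. a \<circ> t) id w)"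
  proof (induction w rule: rev_induct)
    case (snoc a w)
    show ?case
    proof (cases "w = []")
      case True
      then show ?thesis using snoc.prems letter by simp
    next
      case False
      moreover have "set w \<subseteq> Sig" using snoc.prems by simp
      ultimately have "P (foldl (\<lambda>t a. a \<circ> t) id w)" using snoc.IH by blast
      moreover have "a \<in> Sig" using snoc.prems by simp
      ultimately have "P (a \<circ> foldl (\<lambda>t a. a \<circ> t) id w)" by (rule step)
      then show ?thesis by (simp only: foldl_append foldl_Cons foldl_Nil)
    qed
  qed simp
  ultimately show ?thesis by blast
qed

lemma funpow_absorbing:
  assumes "f c = c" "(f ^^ k) x = c" "k \<le> j"
  shows "(f ^^ j) x = c"
  using assms(3)
proof (induction j rule: dec_induct)
  case (step j)
  then show ?case using assms(1) by simp
qed (use assms(2) in simp)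

lemma exists_not_in_image:
  assumes "finite A" "k \<in> A" "f k \<notin> A"
  shows "\<exists>i\<in>A. i \<notin> f ` A"
proof (rule ccontr)
  assume "\<not> ?thesis"
  then have "A = f ` A"
    using assms(1) by (intro card_seteq) (auto intro: card_image_le)
  then show False using assms(2,3) by blast
qed

lemma QM_bounds: "q \<in> QM n \<Longrightarrow> 0 < q \<and> q < n - 2"
  by (auto simp: QM_def)

lemma state_cases: "q < n \<Longrightarrow> q = 0 \<or> q \<in> QM n \<or> q = n - 2 \<or> q = n - 1"
  by (auto simp: QM_def)

lemma transf_comp: "s \<in> transf n \<Longrightarrow> t \<in> transf n \<Longrightarrow> t \<circ> s \<in> transf n"
  by (simp add: transf_def)

definition sink_ext :: "nat \<Rightarrow> nat \<Rightarrow> (nat \<Rightarrow> nat) \<Rightarrow> nat \<Rightarrow> nat" where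
  "sink_ext n z f = (\<lambda>q. if q = 0 then z else if q \<in> QM n then f q else if q < n then n - 1 else q)"

lemma sink_ext_0 [simp]: "sink_ext n z f 0 = z"
  by (simp add: sink_ext_def)

lemma sink_ext_QM [simp]: "q \<in> QM n \<Longrightarrow> sink_ext n z f q = f q"
  by (simp add: sink_ext_def QM_def)

lemma sink_ext_transf: "z < n \<Longrightarrow> (\<And>q. q \<in> QM n \<Longrightarrow> f q < n) \<Longrightarrow> sink_ext n z f \<in> transf n"
  by (auto simp: sink_ext_def transf_def dest: QM_bounds)

lemma sink_ext_cong: "(\<And>q. q \<in> QM n \<Longrightarrow> f q = g q) \<Longrightarrow> sink_ext n z f = sink_ext n z g"
  by (auto simp: sink_ext_def)

lemma comp_sink_ext:
  assumes "u \<in> transf n" "u (n - 1) = n - 1"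
  shows "u \<circ> sink_ext n z f = sink_ext n (u z) (u \<circ> f)"
proof
  fix q
  show "(u \<circ> sink_ext n z f) q = sink_ext n (u z) (u \<circ> f) q"
    using assms by (cases "q < n") (simp_all add: sink_ext_def transf_def)
qed

lemma sink_ext_eq:
  assumes "t \<in> transf n" "t (n - 2) = n - 1" "t (n - 1) = n - 1"
  shows "t = sink_ext n (t 0) t"
proof
  fix q
  show "t q = sink_ext n (t 0) t q"
    using assms state_cases[of q n] by (cases "q < n") (auto simp: sink_ext_def transf_def)
qed

lemma cExcl_eq_sink_ext: "cExcl n = sink_ext n (n - 2) (\<lambda>_. n - 1)"
  by (auto simp: cExcl_def sink_ext_def fun_eq_iff dest: QM_bounds)

lemma dExcl_eq_sink_ext: "dExcl n p = sink_ext n p (\<lambda>_. n - 1)"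
  by (auto simp: dExcl_def sink_ext_def fun_eq_iff dest: QM_bounds)

definition W_shape :: "nat \<Rightarrow> (nat \<Rightarrow> nat) \<Rightarrow> bool" where
  "W_shape n t \<longleftrightarrow> t \<in> transf n \<and> t (n - 2) = n - 1 \<and> t (n - 1) = n - 1 \<and> (\<forall>q\<in>QM n. t q \<noteq> 0) \<and>
     (t 0 = n - 1 \<or> t 0 = n - 2 \<and> (\<forall>q\<in>QM n. t q \<noteq> n - 2) \<or>
      t 0 \<in> QM n \<and> (\<forall>q\<in>QM n. t q \<in> {n - 2, n - 1}))"

lemma W_shapeD:
  assumes "W_shape n t"
  shows "t \<in> transf n" "t (n - 2) = n - 1" "t (n - 1) = n - 1" "q \<in> QM n \<Longrightarrow> t q \<noteq> 0"
  using assms by (simp_all add: W_shape_def)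

lemma W_shape_lt: "W_shape n t \<Longrightarrow> q < n \<Longrightarrow> t q < n"
  by (simp add: W_shape_def transf_def)

lemma W_shape_cases [consumes 1, case_names sink n2 QM]:
  assumes "W_shape n t"
  obtains "t 0 = n - 1" | "t 0 = n - 2" "\<forall>q\<in>QM n. t q \<noteq> n - 2"
    | "t 0 \<in> QM n" "\<forall>q\<in>QM n. t q \<in> {n - 2, n - 1}"
  using assms unfolding W_shape_def by blast

lemma W_shape_comp_sink_ext: "W_shape n u \<Longrightarrow> u \<circ> sink_ext n z f = sink_ext n (u z) (u \<circ> f)"
  using comp_sink_ext by (simp add: W_shape_def)

context
  fixes n :: nat
  assumes n: "4 \<le> n"
begin

lemma sinks_distinct: "n - 2 \<noteq> 0" "n - 1 \<noteq> 0" "n - 1 \<noteq> n - 2" "n - 2 < n" "n - 1 < n"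
  using n by auto

lemma one_in_QM: "1 \<in> QM n"
  using n by (simp add: QM_def)

lemma sink_ext_sinks: "sink_ext n z f (n - 2) = n - 1" "sink_ext n z f (n - 1) = n - 1"
  using n by (auto simp: sink_ext_def QM_def)

lemma W_shape_sink_ext:
  assumes "z < n" "\<forall>q\<in>QM n. f q < n \<and> f q \<noteq> 0"
    and "z = n - 1 \<or> z = n - 2 \<and> (\<forall>q\<in>QM n. f q \<noteq> n - 2) \<or> z \<in> QM n \<and> (\<forall>q\<in>QM n. f q \<in> {n - 2, n - 1})"
  shows "W_shape n (sink_ext n z f)"
proof -
  have "sink_ext n z f \<in> transf n" using assms(1,2) by (simp add: sink_ext_transf)
  moreover have "\<forall>q\<in>QM n. sink_ext n z f q \<noteq> 0" using assms(2) by simp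
  ultimately show ?thesis using assms(3) sink_ext_sinks by (simp add: W_shape_def)
qed

lemma W_shape_nonzero:
  assumes t: "W_shape n t" and q: "q < n"
  shows "t q \<noteq> 0"
proof -
  have "t 0 \<noteq> 0" using t sinks_distinct by (auto simp: W_shape_def dest: QM_bounds)
  moreover have "t (n - 2) \<noteq> 0" "t (n - 1) \<noteq> 0" "q \<in> QM n \<Longrightarrow> t q \<noteq> 0"
    using W_shapeD[OF t] sinks_distinct by simp_all
  ultimately show ?thesis using state_cases[OF q] by blast
qed

lemma W_shape_n2: "W_shape n t \<Longrightarrow> t 0 = n - 2 \<Longrightarrow> q \<in> QM n \<Longrightarrow> t q \<noteq> n - 2"
  using sinks_distinct by (auto simp: W_shape_def dest: QM_bounds)

lemma W_shape_QM: "W_shape n t \<Longrightarrow> t 0 \<in> QM n \<Longrightarrow> q \<in> QM n \<Longrightarrow> t q \<in> {n - 2, n - 1}"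
  by (auto simp: W_shape_def dest: QM_bounds)

lemma W_shape_iterate:
  assumes t: "W_shape n t" and j: "1 \<le> j" and q: "0 < q" "q < n - 1"
  shows "(t ^^ j) 0 = n - 1 \<or> (t ^^ j) 0 \<noteq> (t ^^ j) q"
proof -
  note sinks = W_shapeD(2,3)[OF t]
  have q_cases: "q \<in> QM n \<or> q = n - 2" using q state_cases[of q n] by auto
  have iter_sink: "(t ^^ k) x = n - 1 \<Longrightarrow> k \<le> j \<Longrightarrow> (t ^^ j) x = n - 1" for k x
    using funpow_absorbing[of t "n - 1", OF sinks(2)] .
  from t show ?thesis
  proof (cases rule: W_shape_cases)
    case sink
    then have "(t ^^ j) 0 = n - 1" using iter_sink[of 1 0] j by simp
    then show ?thesis ..
  next
    case n2
    have "t q \<noteq> n - 2" using q_cases n2(2) sinks(1) sinks_distinct(3) by auto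
    then have "t 0 \<noteq> t q" using n2(1) by simp
    moreover have "(t ^^ 2) 0 = n - 1" using n2(1) sinks(1) by (simp add: numeral_2_eq_2)
    ultimately show ?thesis using j iter_sink[of 2 0] by (cases "j = 1") simp_all
  next
    case QM
    have tq: "t q \<in> {n - 2, n - 1}" using QM q_cases sinks by auto
    then have "t 0 \<noteq> t q" using QM(1) by (auto dest: QM_bounds)
    moreover have "(t ^^ 2) q = n - 1" using tq sinks by (auto simp: numeral_2_eq_2)
    ultimately show ?thesis using j iter_sink[of 2 q] by (cases "j = 1") simp_all
  qed
qed

lemma W_bf6_iff_W_shape: "t \<in> W_bf6 n \<longleftrightarrow> W_shape n t"
proof
  assume "t \<in> W_bf6 n"
  then have t: "t \<in> transf n" "t (n - 2) = n - 1" "t (n - 1) = n - 1"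
    and zero: "0 \<notin> t ` {0..<n}"
    and iter: "\<forall>j\<ge>1. (t ^^ j) 0 = n - 1 \<or> (\<forall>q. 0 < q \<and> q < n - 1 \<longrightarrow> (t ^^ j) 0 \<noteq> (t ^^ j) q)"
    and shape: "t 0 \<in> {n - 2, n - 1} \<or> t 0 \<in> QM n \<and> (\<forall>q\<in>QM n. t q \<in> {n - 2, n - 1})"
    unfolding W_bf6_def B_bf_def by blast+
  have nonzero: "\<forall>q\<in>QM n. t q \<noteq> 0"
  proof
    fix q assume "q \<in> QM n"
    then have "t q \<in> t ` {0..<n}" by (auto dest: QM_bounds)
    then show "t q \<noteq> 0" using zero by metis
  qed
  have avoid: "\<forall>q\<in>QM n. t q \<noteq> n - 2" if t0: "t 0 = n - 2"
  proof
    fix q assume "q \<in> QM n"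
    then have "0 < q \<and> q < n - 1" by (auto dest: QM_bounds)
    moreover have "t 0 = n - 1 \<or> (\<forall>q. 0 < q \<and> q < n - 1 \<longrightarrow> t 0 \<noteq> t q)"
      using iter[rule_format, of 1] by simp
    ultimately show "t q \<noteq> n - 2" using t0 sinks_distinct(3) by metis
  qed
  show "W_shape n t"
    using t nonzero avoid shape unfolding W_shape_def by blast
next
  assume t: "W_shape n t"
  have "0 \<notin> t ` {0..<n}"
  proof
    assume "0 \<in> t ` {0..<n}"
    then obtain q where "q < n" "t q = 0" by auto
    then show False using W_shape_nonzero[OF t] by blast
  qed
  moreover have "\<forall>j\<ge>1. (t ^^ j) 0 = n - 1 \<or> (\<forall>q. 0 < q \<and> q < n - 1 \<longrightarrow> (t ^^ j) 0 \<noteq> (t ^^ j) q)"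
    using W_shape_iterate[OF t] by blast
  ultimately have "t \<in> B_bf n"
    unfolding B_bf_def using W_shapeD(1-3)[OF t] by blast
  moreover have "t 0 \<in> {n - 2, n - 1} \<or> t 0 \<in> QM n \<and> (\<forall>q\<in>QM n. t q \<in> {n - 2, n - 1})"
    using t by (cases rule: W_shape_cases) auto
  ultimately show "t \<in> W_bf6 n" unfolding W_bf6_def by blast
qed

lemma W_shape_comp:
  assumes s: "W_shape n s" and t: "W_shape n t"
  shows "W_shape n (t \<circ> s)"
proof -
  have base: "t \<circ> s \<in> transf n" "(t \<circ> s) (n - 2) = n - 1" "(t \<circ> s) (n - 1) = n - 1"
    using transf_comp W_shapeD[OF s] W_shapeD[OF t] by simp_all
  have nonzero: "\<forall>q\<in>QM n. (t \<circ> s) q \<noteq> 0"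
  proof
    fix q assume "q \<in> QM n"
    then have "s q < n" using W_shape_lt[OF s] by (auto dest: QM_bounds)
    then show "(t \<circ> s) q \<noteq> 0" using W_shape_nonzero[OF t] by simp
  qed
  have "(t \<circ> s) 0 = n - 1 \<or> (t \<circ> s) 0 = n - 2 \<and> (\<forall>q\<in>QM n. (t \<circ> s) q \<noteq> n - 2) \<or>
      (t \<circ> s) 0 \<in> QM n \<and> (\<forall>q\<in>QM n. (t \<circ> s) q \<in> {n - 2, n - 1})"
  proof (cases "s 0 \<in> QM n")
    case False
    with s have "s 0 = n - 2 \<or> s 0 = n - 1" by (cases rule: W_shape_cases) auto
    then show ?thesis using W_shapeD(2,3)[OF t] by auto
  next
    case True
    text \<open>All of Q_M then goes to the sink, which makes every image of 0 admissible.\<close>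
    have QM_sink: "\<forall>q\<in>QM n. (t \<circ> s) q = n - 1"
    proof
      fix q assume "q \<in> QM n"
      then have "s q \<in> {n - 2, n - 1}" by (rule W_shape_QM[OF s True])
      then show "(t \<circ> s) q = n - 1" using W_shapeD(2,3)[OF t] by auto
    qed
    have "s 0 < n" using True by (auto dest: QM_bounds)
    then have "(t \<circ> s) 0 < n" "(t \<circ> s) 0 \<noteq> 0"
      using W_shape_lt[OF t] W_shape_nonzero[OF t] by simp_all
    then have "(t \<circ> s) 0 \<in> QM n \<or> (t \<circ> s) 0 = n - 2 \<or> (t \<circ> s) 0 = n - 1"
      using state_cases[of "(t \<circ> s) 0" n] by auto
    then show ?thesis using QM_sink sinks_distinct(3) by auto
  qed
  then show ?thesis
    using base nonzero unfolding W_shape_def by blast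
qed

lemma bW_eq_sink_ext:
  assumes i: "i \<in> QM n"
  shows "bW n i = sink_ext n (n - 1) (\<lambda>q. if q = i then n - 2 else q)"
proof
  fix q
  show "bW n i q = sink_ext n (n - 1) (\<lambda>q. if q = i then n - 2 else q) q"
    using i state_cases[of q n] sinks_distinct
    by (cases "q < n") (auto simp: bW_def sink_ext_def dest: QM_bounds)
qed

lemma W_shape_bW: assumes i: "i \<in> QM n" shows "W_shape n (bW n i)"
proof -
  have "W_shape n (sink_ext n (n - 1) (\<lambda>q. if q = i then n - 2 else q))"
    by (rule W_shape_sink_ext) (use sinks_distinct in \<open>auto dest: QM_bounds\<close>)
  then show ?thesis using bW_eq_sink_ext[OF i] by simp
qed

lemma letter_W_shape: assumes "a \<in> Sigma_W n" shows "W_shape n a"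
  using assms unfolding Sigma_W_def
proof (elim UnE)
  assume "a \<in> {bW n i |i. 1 \<le> i \<and> i \<le> n - 3}"
  then show ?thesis using W_shape_bW by (auto simp: QM_def)
next
  assume "a \<in> c_letters n"
  then show ?thesis by (auto simp: c_letters_def W_shape_def)
next
  assume "a \<in> d_letters n"
  then show ?thesis using sinks_distinct by (auto simp: d_letters_def W_shape_def)
qed

lemma trans_semigroup_W_shape: "t \<in> trans_semigroup (Sigma_W n) \<Longrightarrow> W_shape n t"
proof (induction rule: trans_semigroup_induct)
  case (letter a)
  then show ?case by (rule letter_W_shape)
next
  case (step s a)
  then show ?case using W_shape_comp letter_W_shape by blast
qed

lemma sink_ext_id_c_letter: "sink_ext n (n - 2) id \<in> c_letters n"
proof -
  have "sink_ext n (n - 2) id \<noteq> cExcl n"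
  proof
    assume "sink_ext n (n - 2) id = cExcl n"
    then have "sink_ext n (n - 2) id 1 = cExcl n 1" by simp
    then show False using one_in_QM sinks_distinct by (simp add: cExcl_eq_sink_ext)
  qed
  moreover have "sink_ext n (n - 2) id \<in> transf n"
    using sinks_distinct by (auto intro!: sink_ext_transf dest: QM_bounds)
  ultimately show ?thesis
    unfolding c_letters_def using sink_ext_sinks by (auto dest: QM_bounds)
qed

lemma sink_ext_const_d_letter:
  assumes p: "p \<in> QM n"
  shows "sink_ext n p (\<lambda>_. n - 2) \<in> d_letters n"
proof -
  have "sink_ext n p (\<lambda>_. n - 2) \<noteq> dExcl n p'" for p'
  proof
    assume "sink_ext n p (\<lambda>_. n - 2) = dExcl n p'"
    then have "sink_ext n p (\<lambda>_. n - 2) 1 = dExcl n p' 1" by simp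
    then show False using one_in_QM sinks_distinct by (simp add: dExcl_eq_sink_ext)
  qed
  moreover have "sink_ext n p (\<lambda>_. n - 2) \<in> transf n"
    using p sinks_distinct by (auto intro!: sink_ext_transf dest: QM_bounds)
  ultimately show ?thesis
    unfolding d_letters_def using p sink_ext_sinks by auto
qed

lemma bW_in_trans_semigroup: "i \<in> QM n \<Longrightarrow> bW n i \<in> trans_semigroup (Sigma_W n)"
  by (rule trans_semigroup_letter) (auto simp: Sigma_W_def QM_def)

lemma c_letter_in_trans_semigroup: "a \<in> c_letters n \<Longrightarrow> a \<in> trans_semigroup (Sigma_W n)"
  by (rule trans_semigroup_letter) (simp add: Sigma_W_def)

lemma d_letter_in_trans_semigroup: "a \<in> d_letters n \<Longrightarrow> a \<in> trans_semigroup (Sigma_W n)"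
  by (rule trans_semigroup_letter) (simp add: Sigma_W_def)

lemma cExcl_factor: "cExcl n = bW n 1 \<circ> sink_ext n 1 (\<lambda>_. n - 2)"
proof -
  have "bW n 1 \<circ> sink_ext n 1 (\<lambda>_. n - 2) = sink_ext n (bW n 1 1) (bW n 1 \<circ> (\<lambda>_. n - 2))"
    using W_shape_bW[OF one_in_QM] by (rule W_shape_comp_sink_ext)
  moreover have "bW n 1 1 = n - 2" "bW n 1 (n - 2) = n - 1"
    using n by (auto simp: bW_def)
  ultimately show ?thesis by (simp add: cExcl_eq_sink_ext comp_def)
qed

lemma dExcl_factor: "p \<in> QM n \<Longrightarrow> dExcl n p = sink_ext n (n - 2) id \<circ> sink_ext n p (\<lambda>_. n - 2)"
  using W_shape_comp_sink_ext[OF letter_W_shape, of "sink_ext n (n - 2) id" p "\<lambda>_. n - 2"]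
    sink_ext_id_c_letter sink_ext_sinks
  by (simp add: Sigma_W_def dExcl_eq_sink_ext comp_def)

lemma W_shape_in_trans_semigroup_n2:
  assumes t: "W_shape n t" "t 0 = n - 2"
  shows "t \<in> trans_semigroup (Sigma_W n)"
proof (cases "t = cExcl n")
  case True
  then show ?thesis
    using trans_semigroup_comp[OF d_letter_in_trans_semigroup bW_in_trans_semigroup]
      sink_ext_const_d_letter one_in_QM cExcl_factor by metis
next
  case False
  then have "t \<in> c_letters n"
    using t W_shape_n2[OF t] unfolding c_letters_def by (auto simp: W_shape_def)
  then show ?thesis by (rule c_letter_in_trans_semigroup)
qed

lemma W_shape_in_trans_semigroup_QM:
  assumes t: "W_shape n t" "t 0 \<in> QM n"
  shows "t \<in> trans_semigroup (Sigma_W n)"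
proof (cases "\<exists>p\<in>QM n. t = dExcl n p")
  case True
  then show ?thesis
    using trans_semigroup_comp[OF d_letter_in_trans_semigroup c_letter_in_trans_semigroup]
      sink_ext_const_d_letter sink_ext_id_c_letter dExcl_factor by metis
next
  case False
  then have "t \<in> d_letters n"
    using t W_shape_QM[OF t] unfolding d_letters_def by (auto simp: W_shape_def)
  then show ?thesis by (rule d_letter_in_trans_semigroup)
qed

lemma W_shape_redirect:
  assumes t: "W_shape n t" and i: "i \<in> QM n"
  shows "W_shape n (sink_ext n (n - 2) (\<lambda>q. if t q = n - 2 then i else t q))"
proof (rule W_shape_sink_ext)
  have "q \<in> QM n \<Longrightarrow> t q < n \<and> t q \<noteq> 0" for q
    using W_shape_lt[OF t] W_shape_nonzero[OF t] by (auto dest: QM_bounds)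
  then show "\<forall>q\<in>QM n. (if t q = n - 2 then i else t q) < n \<and> (if t q = n - 2 then i else t q) \<noteq> 0"
    using i by (auto dest: QM_bounds)
qed (use i sinks_distinct in \<open>auto dest: QM_bounds\<close>)

lemma W_shape_in_trans_semigroup_sink:
  assumes t: "W_shape n t" "t 0 = n - 1"
  shows "t \<in> trans_semigroup (Sigma_W n)"
proof -
  define r where "r i = sink_ext n (n - 2) (\<lambda>q. if t q = n - 2 then i else t q)" for i
  have r_in: "r i \<in> trans_semigroup (Sigma_W n)" if "i \<in> QM n" for i
    using W_shape_in_trans_semigroup_n2[OF W_shape_redirect[OF t(1) that]] by (simp add: r_def)
  have t_QM: "t q \<in> QM n \<or> t q = n - 2 \<or> t q = n - 1" if "q \<in> QM n" for q
  proof -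
    have "q < n" using that by (auto dest: QM_bounds)
    then show ?thesis using state_cases[of "t q" n] W_shape_lt[OF t(1)] W_shape_nonzero[OF t(1)] by auto
  qed
  have t_from_QM: "sink_ext n (n - 1) g = t" if "\<And>q. q \<in> QM n \<Longrightarrow> g q = t q" for g
    using sink_ext_cong[of n g t "n - 1", OF that] sink_ext_eq[of t n] t by (simp add: W_shape_def)
  show ?thesis
  proof (cases "\<exists>k\<in>QM n. t k = n - 2")
    case False
    let ?c = "sink_ext n (n - 2) id"
    have "W_shape n ?c" using sink_ext_id_c_letter by (intro letter_W_shape) (simp add: Sigma_W_def)
    then have "?c \<circ> r 1 = sink_ext n (n - 1) (?c \<circ> (\<lambda>q. if t q = n - 2 then 1 else t q))"
      by (simp only: r_def W_shape_comp_sink_ext sink_ext_sinks(1))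
    also have "\<dots> = t"
    proof (rule t_from_QM)
      fix q assume q: "q \<in> QM n"
      then have "t q \<noteq> n - 2" using False by blast
      then show "(?c \<circ> (\<lambda>q. if t q = n - 2 then 1 else t q)) q = t q"
        using t_QM[OF q] sink_ext_sinks(2) by auto
    qed
    finally show ?thesis
      using trans_semigroup_comp[OF r_in[OF one_in_QM] c_letter_in_trans_semigroup[OF sink_ext_id_c_letter]]
      by simp
  next
    case True
    then obtain k where k: "k \<in> QM n" "t k = n - 2" by blast
    moreover have "t k \<notin> QM n" using k(2) QM_bounds[of "t k" n] by auto
    moreover have "finite (QM n)" by (simp add: QM_def)
    ultimately obtain i where i: "i \<in> QM n" "i \<notin> t ` QM n"
      using exists_not_in_image[of "QM n" k t] by blast
    have "bW n i (n - 2) = n - 1" using i(1) sinks_distinct by (auto simp: bW_def dest: QM_bounds)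
    then have "bW n i \<circ> r i = sink_ext n (n - 1) (bW n i \<circ> (\<lambda>q. if t q = n - 2 then i else t q))"
      by (simp only: r_def W_shape_comp_sink_ext[OF W_shape_bW[OF i(1)]])
    also have "\<dots> = t"
    proof (rule t_from_QM)
      fix q assume q: "q \<in> QM n"
      have "t q \<noteq> i" "t q \<noteq> 0" "i \<noteq> 0" using i q W_shape_nonzero[OF t(1)] by (auto dest: QM_bounds)
      then show "(bW n i \<circ> (\<lambda>q. if t q = n - 2 then i else t q)) q = t q"
        by (auto simp: bW_def)
    qed
    finally show ?thesis
      using trans_semigroup_comp[OF r_in[OF i(1)] bW_in_trans_semigroup[OF i(1)]] by simp
  qed
qed

lemma W_shape_in_trans_semigroup:
  assumes t: "W_shape n t"
  shows "t \<in> trans_semigroup (Sigma_W n)"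
  using t
proof (cases rule: W_shape_cases)
  case sink
  then show ?thesis by (rule W_shape_in_trans_semigroup_sink[OF t])
next
  case n2
  then show ?thesis by (intro W_shape_in_trans_semigroup_n2[OF t])
next
  case QM
  then show ?thesis by (intro W_shape_in_trans_semigroup_QM[OF t])
qed

end

theorem mainTheorem7:
  fixes n :: nat
  assumes "n \<ge> 4"
  shows "trans_semigroup (Sigma_W n) = W_bf6 n"
proof (intro equalityI subsetI)
  fix t
  show "t \<in> trans_semigroup (Sigma_W n) \<Longrightarrow> t \<in> W_bf6 n"
    by (simp add: W_bf6_iff_W_shape[OF assms] trans_semigroup_W_shape[OF assms])
  show "t \<in> W_bf6 n \<Longrightarrow> t \<in> trans_semigroup (Sigma_W n)"
    by (simp add: W_bf6_iff_W_shape[OF assms] W_shape_in_trans_semigroup[OF assms])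
qed

end
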